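(* Let $A=R/I$ be a graded Artinian Gorenstein algebra of socle degree $j$ with $I_2=\langle w^2,wx,wy\rangle$ and dual generator $F=G+WZ^{[j-1]}$, $G\in K_{DP}[X,Y,Z]_j$. Let $J=\mathrm{Ann}_R(G)$. For $\lambda\in K$ set $G_\lambda=G+\lambda Z^{[j]}$, $F_\lambda=F+\lambda Z^{[j]}$, $J(\lambda)=\mathrm{Ann}_R(G_\lambda)$, $I(\lambda)=\mathrm{Ann}_R(F_\lambda)$. Then $H(R/I)=H(R/I(\lambda))$ and $H(R/(I\cap J))=H(R/(I(\lambda)\cap J(\lambda)))$. If moreover $\alpha(J)\le j/2$ and $\lambda\ne0$, then $\alpha(J(\lambda))=j+1-\alpha(J)$, $H(R/J(\lambda))_i=H(R/J)_i+1$ for $\alpha(J)\le i\le j-\alpha(J)$ and $H(R/J(\lambda))_i=H(R/J)_i$ otherwise, and $H(R/I(\lambda))=H(R/J(\lambda))+(0,1,1,\dots,1,0)$.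
   Context: $K$ algebraically closed, $R=K[w,x,y,z]$, with contraction action on the divided power algebra $K_{DP}[W,X,Y,Z]$; $\mathrm{Ann}_R(F)=\{h\in R:h\circ F=0\}$. For an ideal $J=\mathrm{Ann}_R(G)$ with $G\in K_{DP}[X,Y,Z]$, set $J'=J\cap K[x,y,z]$ and $\alpha(J)=\min\{\alpha\ge1: J'_\alpha\not\subset(x,y)K[x,y,z]\}$. The sequence $(0,1,\dots,1,0)$ has length $j+1$. *)

theory Defs
  imports "HOL-Library.Poly_Mapping" "HOL-Library.Product_Plus"
          "HOL-Computational_Algebra.Polynomial"
begin

text \<open>Monomials in the four variables w,x,y,z (resp. W,X,Y,Z) are encoded by their
exponent vectors (a,b,c,d).  An element of R = K[w,x,y,z] is a finitely supported map
from exponent vectors to K (coefficient of w^a x^b y^c z^d); an element of the divided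
power algebra K_DP[W,X,Y,Z] likewise (coefficient of W^[a] X^[b] Y^[c] Z^[d]).\<close>

type_synonym mon = "nat \<times> nat \<times> nat \<times> nat"
type_synonym 'k rpoly = "mon \<Rightarrow>\<^sub>0 'k"
type_synonym 'k dppoly = "mon \<Rightarrow>\<^sub>0 'k"

fun mdeg :: "mon \<Rightarrow> nat" where
  "mdeg (a, b, c, d) = a + b + c + d"

definition homog :: "nat \<Rightarrow> (mon \<Rightarrow>\<^sub>0 'k::zero) \<Rightarrow> bool" where
  "homog i p \<longleftrightarrow> (\<forall>m\<in>Poly_Mapping.keys p. mdeg m = i)"

text \<open>Contraction: w^a x^b y^c z^d acting on W^[a'] ... gives the monomial with exponent
difference if it is componentwise nonnegative, else 0.  Result: coefficient function
of the resulting divided power polynomial.\<close>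
definition contract :: "'k::comm_ring_1 rpoly \<Rightarrow> 'k dppoly \<Rightarrow> (mon \<Rightarrow> 'k)" where
  "contract h F = (\<lambda>c. \<Sum>a\<in>Poly_Mapping.keys h. Poly_Mapping.lookup h a * Poly_Mapping.lookup F (a + c))"

definition Ann :: "'k::comm_ring_1 dppoly \<Rightarrow> 'k rpoly set" where
  "Ann F = {h. contract h F = (\<lambda>_. 0)}"

definition pscale :: "'k::field \<Rightarrow> (mon \<Rightarrow>\<^sub>0 'k) \<Rightarrow> (mon \<Rightarrow>\<^sub>0 'k)" where
  "pscale c p = Poly_Mapping.map (\<lambda>v. c * v) p"

definition kdim :: "('k::field rpoly) set \<Rightarrow> nat" where
  "kdim S = vector_space.dim pscale S"

definition kspan :: "('k::field rpoly) set \<Rightarrow> 'k rpoly set" where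
  "kspan S = module.span pscale S"

definition Rdeg :: "nat \<Rightarrow> ('k::zero) rpoly set" where
  "Rdeg i = {p. homog i p}"

definition hilb :: "('k::field) rpoly set \<Rightarrow> nat \<Rightarrow> nat" where
  "hilb I i = kdim (Rdeg i :: 'k rpoly set) - kdim (I \<inter> Rdeg i)"

definition vw :: "'k::comm_ring_1 rpoly" where "vw = Poly_Mapping.single (1,0,0,0) 1"
definition vx :: "'k::comm_ring_1 rpoly" where "vx = Poly_Mapping.single (0,1,0,0) 1"
definition vy :: "'k::comm_ring_1 rpoly" where "vy = Poly_Mapping.single (0,0,1,0) 1"
definition vz :: "'k::comm_ring_1 rpoly" where "vz = Poly_Mapping.single (0,0,0,1) 1"

definition Kxyz :: "('k::zero) rpoly set" where
  "Kxyz = {p. \<forall>m\<in>Poly_Mapping.keys p. fst m = 0}"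

definition ideal_xy :: "('k::comm_ring_1) rpoly set" where
  "ideal_xy = {vx * p + vy * q | p q. p \<in> Kxyz \<and> q \<in> Kxyz}"

definition alpha :: "('k::comm_ring_1) rpoly set \<Rightarrow> nat" where
  "alpha J = (LEAST a. 1 \<le> a \<and> \<not> ((J \<inter> Kxyz) \<inter> Rdeg a \<subseteq> ideal_xy))"

definition DPxyz_deg :: "nat \<Rightarrow> ('k::zero) dppoly set" where
  "DPxyz_deg j = {G. \<forall>m\<in>Poly_Mapping.keys G. fst m = 0 \<and> mdeg m = j}"

end

theory Submission
  imports Defs
begin

text \<open>The proof works one degree at a time. Let \<open>h\<close> be a form of degree \<open>i \<le> j\<close> with
  coefficient \<open>c\<close> at \<open>z^i\<close> and \<open>d\<close> at \<open>w z^(i-1)\<close>. Then \<open>h \<circ> Z^[j] = c Z^[j-i]\<close> and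
  \<open>h \<circ> W Z^[j-1] = c W Z^[j-1-i] + d Z^[j-i]\<close>, so adding \<open>\<lambda> Z^[j]\<close> matters only through
  \<open>c\<close>. Below degree \<open>j\<close> the annihilator of \<open>F\<close> forces \<open>c = 0\<close>, and in degree \<open>j\<close> the
  annihilators have codimension one (two for \<open>I \<inter> J\<close>) whatever \<open>\<lambda>\<close> is; this gives the
  first two equalities.

  For \<open>J(\<lambda>)\<close> the key input is apolarity: \<open>Z^[j-i]\<close> is a contraction \<open>h \<circ> G\<close> of a form
  of degree \<open>i\<close> if \<open>j - i < \<alpha>(J)\<close>, and no nonzero multiple of it is otherwise. Hence
  \<open>J\<^sub>i\<close> and \<open>J(\<lambda>)\<^sub>i\<close> have the same elements with \<open>c = 0\<close>; \<open>J\<^sub>i\<close> has one with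
  \<open>c \<noteq> 0\<close> iff \<open>\<alpha>(J) \<le> i\<close>, and (for \<open>\<lambda> \<noteq> 0\<close>, \<open>2 \<alpha>(J) \<le> j\<close>) \<open>J(\<lambda>)\<^sub>i\<close> has one
  iff \<open>j - i < \<alpha>(J)\<close>. This yields the Hilbert function of \<open>R/J(\<lambda>)\<close> and
  \<open>\<alpha>(J(\<lambda>)) = j + 1 - \<alpha>(J)\<close>. Likewise, for \<open>1 \<le> i \<le> j - 1\<close>, the term \<open>W Z^[j-1]\<close>
  costs exactly one dimension, detected by \<open>d\<close>. The field need not be algebraically closed.\<close>

section \<open>Linear algebra in a graded piece\<close>

lemma lookup_pscale [simp]: "Poly_Mapping.lookup (pscale c p) m = c * Poly_Mapping.lookup p m"
  unfolding pscale_def by (simp add: Poly_Mapping.map.rep_eq when_def)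

interpretation kv: vector_space "pscale :: 'k::field \<Rightarrow> 'k rpoly \<Rightarrow> 'k rpoly"
  by unfold_locales (auto intro!: poly_mapping_eqI simp: lookup_add algebra_simps)

interpretation kscalar: vector_space "(*) :: 'k::field \<Rightarrow> 'k \<Rightarrow> 'k"
  by unfold_locales (auto simp: algebra_simps)

declare kscalar.scale_scale [simp del] \<comment> \<open>for \<open>(*)\<close> this is \<open>mult.assoc\<close> reversed\<close>

interpretation kv_maps: vector_space_pair "pscale :: 'k::field \<Rightarrow> _" "pscale :: 'k \<Rightarrow> _" ..
interpretation kv_forms: vector_space_pair "pscale :: 'k::field \<Rightarrow> _" "(*) :: 'k \<Rightarrow> 'k \<Rightarrow> 'k" ..

abbreviation linear_form :: "('k::field rpoly \<Rightarrow> 'k) \<Rightarrow> bool" where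
  "linear_form f \<equiv> Vector_Spaces.linear pscale (*) f"

lemma linear_formI:
  assumes "\<And>x y. f (x + y) = f x + f y" and "\<And>c x. f (pscale c x) = c * f x"
  shows "linear_form f"
  using assms
  by (simp add: Vector_Spaces.linear_iff kv.vector_space_axioms kscalar.vector_space_axioms
      module_hom_iff)

lemma linear_form_lookup: "linear_form (\<lambda>h. Poly_Mapping.lookup h m)"
  by (rule linear_formI) (simp_all add: lookup_add)

lemma subspace_kernel_linear_form: "linear_form f \<Longrightarrow> kv.subspace {h. f h = 0}"
  unfolding kv.subspace_def using kv_forms.linear_0 kv_forms.linear_add kv_forms.linear_scale by fastforce

lemma mdeg_add: "mdeg (a + b) = mdeg a + mdeg b"
  by (cases a; cases b) auto

lemma mdeg_eq_0_iff: "mdeg m = 0 \<longleftrightarrow> m = 0"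
  by (cases m) (auto simp: zero_prod_def)

lemma finite_mdeg_eq: "finite {m. mdeg m = i}"
proof (rule finite_subset)
  show "{m. mdeg m = i} \<subseteq> {0..i} \<times> {0..i} \<times> {0..i} \<times> {0..i}" by auto
qed auto

lemma in_RdegD: "h \<in> Rdeg i \<Longrightarrow> m \<in> Poly_Mapping.keys h \<Longrightarrow> mdeg m = i"
  by (auto simp: Rdeg_def homog_def)

lemma single_in_Rdeg: "mdeg m = i \<Longrightarrow> Poly_Mapping.single m v \<in> Rdeg i"
  by (auto simp: Rdeg_def homog_def)

lemma subspace_Rdeg: "kv.subspace (Rdeg i :: 'k::field rpoly set)"
  unfolding kv.subspace_def Rdeg_def homog_def
proof (intro conjI allI ballI impI; simp only: mem_Collect_eq)
  fix x y :: "'k rpoly"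
  assume x: "\<forall>m\<in>Poly_Mapping.keys x. mdeg m = i" and y: "\<forall>m\<in>Poly_Mapping.keys y. mdeg m = i"
  show "\<forall>m\<in>Poly_Mapping.keys (x + y). mdeg m = i" using x y keys_add[of x y] by blast
next
  fix c :: 'k and x :: "'k rpoly" assume x: "\<forall>m\<in>Poly_Mapping.keys x. mdeg m = i"
  show "\<forall>m\<in>Poly_Mapping.keys (pscale c x). mdeg m = i" using x by (auto simp: in_keys_iff)
qed simp

lemma poly_mapping_sum_singles:
  "p = (\<Sum>m\<in>Poly_Mapping.keys p. Poly_Mapping.single m (Poly_Mapping.lookup p m))"
  by (rule poly_mapping_eqI) (auto simp: lookup_sum lookup_single when_def in_keys_iff)

lemma Rdeg_subset_span_monomials:
  "Rdeg i \<subseteq> kv.span ((\<lambda>m. Poly_Mapping.single m (1::'k::field)) ` {m. mdeg m = i})"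
proof
  fix p :: "'k rpoly" assume p: "p \<in> Rdeg i"
  have single_eq: "Poly_Mapping.single m v = pscale v (Poly_Mapping.single m 1)" for m and v :: 'k
    by (rule poly_mapping_eqI) (simp add: lookup_single when_def)
  have "p = (\<Sum>m\<in>Poly_Mapping.keys p. pscale (Poly_Mapping.lookup p m) (Poly_Mapping.single m 1))"
    by (subst poly_mapping_sum_singles) (simp add: single_eq[symmetric])
  also have "\<dots> \<in> kv.span ((\<lambda>m. Poly_Mapping.single m 1) ` {m. mdeg m = i})"
    using p by (intro kv.span_sum kv.span_scale kv.span_base) (auto simp: Rdeg_def homog_def)
  finally show "p \<in> kv.span ((\<lambda>m. Poly_Mapping.single m 1) ` {m. mdeg m = i})" .
qed

lemma finite_independent_Rdeg:
  assumes "B \<subseteq> Rdeg i" "kv.independent B"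
  shows "finite (B :: 'k::field rpoly set)"
proof -
  have "B \<subseteq> kv.span ((\<lambda>m. Poly_Mapping.single m (1::'k)) ` {m. mdeg m = i})"
    using assms(1) Rdeg_subset_span_monomials by blast
  then show ?thesis using kv.independent_span_bound[OF _ assms(2)] finite_mdeg_eq by blast
qed

lemma dim_le_dim_Rdeg:
  fixes X :: "'k::field rpoly set"
  assumes "X \<subseteq> Rdeg i"
  shows "kv.dim X \<le> kv.dim (Rdeg i :: 'k::field rpoly set)"
proof -
  obtain B where B: "B \<subseteq> Rdeg i" "kv.independent B" "Rdeg i \<subseteq> kv.span (B :: 'k rpoly set)"
      "card B = kv.dim (Rdeg i :: 'k rpoly set)"
    by (rule kv.basis_exists)
  have "X \<subseteq> kv.span B" using assms B(3) by (rule order_trans)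
  from kv.dim_le_card[OF this finite_independent_Rdeg[OF B(1,2)]] show ?thesis using B(4) by simp
qed

lemma dim_Int_kernel:
  assumes X: "kv.subspace X" "X \<subseteq> Rdeg i" and f: "linear_form f"
  shows "kv.dim X = kv.dim (X \<inter> {h. f h = 0}) + (if X \<subseteq> {h. f h = 0} then 0 else 1)"
proof (cases "X \<subseteq> {h. f h = 0}")
  case False
  then obtain k where k: "k \<in> X" "f k \<noteq> 0" by blast
  let ?Y = "X \<inter> {h. f h = 0}"
  obtain B where B: "B \<subseteq> ?Y" "kv.independent B" "?Y \<subseteq> kv.span B" "card B = kv.dim ?Y"
    by (rule kv.basis_exists)
  have "kv.span B \<subseteq> ?Y"
    by (intro kv.span_minimal[OF B(1)] kv.subspace_inter X(1) subspace_kernel_linear_form f)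
  then have k_notin: "k \<notin> kv.span B" using k by auto
  have "X \<subseteq> kv.span (insert k B)"
  proof
    fix x assume x: "x \<in> X"
    let ?c = "f x / f k"
    have "x - pscale ?c k \<in> ?Y"
      using x k X(1) kv_forms.linear_diff[OF f] kv_forms.linear_scale[OF f]
      by (simp add: kv.subspace_diff kv.subspace_scale)
    then have "x - pscale ?c k \<in> kv.span (insert k B)"
      using B(3) kv.span_mono[of B "insert k B"] by blast
    then have "(x - pscale ?c k) + pscale ?c k \<in> kv.span (insert k B)"
      by (rule kv.span_add[OF _ kv.span_scale[OF kv.span_base]]) simp
    then show "x \<in> kv.span (insert k B)" by simp
  qed
  then have "card (insert k B) = kv.dim X"
    using B(1) k(1) by (intro kv.basis_card_eq_dim kv.independent_insertI k_notin B(2)) auto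
  moreover have "finite B" using finite_independent_Rdeg[OF _ B(2)] B(1) X(2) by blast
  moreover have "k \<notin> B" using k_notin kv.span_base by blast
  ultimately show ?thesis using B(4) False by simp
qed (simp add: Int_absorb2)

lemma linear_form_factors:
  assumes V: "kv.subspace V" and L: "Vector_Spaces.linear pscale pscale L" and \<phi>: "linear_form \<phi>"
    and ker: "\<And>v. v \<in> V \<Longrightarrow> L v = 0 \<Longrightarrow> \<phi> v = 0"
  obtains \<psi> where "linear_form \<psi>" "\<And>v. v \<in> V \<Longrightarrow> \<phi> v = \<psi> (L v)"
proof -
  obtain R where R: "range R \<subseteq> V" "Vector_Spaces.linear pscale pscale R" "\<forall>w\<in>L ` V. L (R w) = w"
    using kv_maps.linear_exists_right_inverse_on[OF L V] by blast
  show thesis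
  proof
    show "linear_form (\<phi> \<circ> R)" by (rule Vector_Spaces.linear_compose[OF R(2) \<phi>])
    fix v assume v: "v \<in> V"
    have "R (L v) - v \<in> V" using R(1) v V by (blast intro: kv.subspace_diff)
    moreover have "L (R (L v) - v) = 0" using R(3) v kv_maps.linear_diff[OF L] by simp
    ultimately have "\<phi> (R (L v) - v) = 0" by (rule ker)
    then show "\<phi> v = (\<phi> \<circ> R) (L v)" using kv_forms.linear_diff[OF \<phi>] by simp
  qed
qed

section \<open>Contraction\<close>

declare split_paired_All [simp del]

lemma contract_superset:
  assumes "finite S" "Poly_Mapping.keys h \<subseteq> S"
  shows "contract h P c = (\<Sum>a\<in>S. Poly_Mapping.lookup h a * Poly_Mapping.lookup P (a + c))"
  unfolding contract_def by (rule sum.mono_neutral_left[OF assms]) (auto simp: in_keys_iff)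

lemma contract_single_left: "contract (Poly_Mapping.single a v) P c = v * Poly_Mapping.lookup P (a + c)"
  by (simp add: contract_superset[of "{a}"] lookup_single)

lemma contract_single_right:
  "contract h (Poly_Mapping.single m v) c =
    (\<Sum>a\<in>Poly_Mapping.keys h. Poly_Mapping.lookup h a * v when a + c = m)"
  by (auto simp: contract_def lookup_single when_def intro!: sum.cong)

lemma contract_single_hit: "contract h (Poly_Mapping.single (a + c) v) c = Poly_Mapping.lookup h a * v"
proof -
  have "contract h (Poly_Mapping.single (a + c) v) c =
      (\<Sum>b\<in>Poly_Mapping.keys h. Poly_Mapping.lookup h b * v when b = a)"
    unfolding contract_single_right by simp
  also have "\<dots> = Poly_Mapping.lookup h a * v" by (auto simp: when_def in_keys_iff)
  finally show ?thesis .
qed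

lemma contract_add_left: "contract (x + y) P c = contract x P c + contract y P c"
proof -
  have "Poly_Mapping.keys (x + y) \<subseteq> Poly_Mapping.keys x \<union> Poly_Mapping.keys y" by (rule keys_add)
  then show ?thesis
    by (simp add: contract_superset[of "Poly_Mapping.keys x \<union> Poly_Mapping.keys y"] lookup_add
        sum.distrib distrib_right)
qed

lemma contract_scale_left: "contract (pscale t x) P c = t * contract x P c"
proof -
  have "Poly_Mapping.keys (pscale t x) \<subseteq> Poly_Mapping.keys x" by (auto simp: in_keys_iff)
  then show ?thesis by (simp add: contract_superset[of "Poly_Mapping.keys x"] sum_distrib_left mult.assoc)
qed

lemma linear_form_contract: "linear_form (\<lambda>h. contract h P c)"
  by (rule linear_formI) (simp_all add: contract_add_left contract_scale_left)

lemma contract_diff_left: "contract (x - y) P c = contract x P c - contract (y :: 'k::field rpoly) P c"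
  using kv_forms.linear_diff[OF linear_form_contract] .

lemma contract_sum_left:
  "contract (\<Sum>x\<in>A. f x :: 'k::field rpoly) P c = (\<Sum>x\<in>A. contract (f x) P c)"
  using kv_forms.linear_sum[OF linear_form_contract] .

lemma contract_add_right: "contract h (P + Q) c = contract h P c + contract h Q c"
  by (simp add: contract_def lookup_add sum.distrib distrib_left)

lemma contract_symmetric:
  "(\<Sum>a\<in>Poly_Mapping.keys g. Poly_Mapping.lookup g a * contract h P a) =
   (\<Sum>b\<in>Poly_Mapping.keys h. Poly_Mapping.lookup h b * contract g P b)"
  unfolding contract_def sum_distrib_left
  by (subst sum.swap) (simp add: add.commute mult.commute mult.left_commute)

lemma contract_nonzero_mdeg:
  assumes h: "h \<in> Rdeg i" and P: "homog n P" and nz: "contract h P c \<noteq> 0"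
  shows "i + mdeg c = n"
proof -
  from nz obtain a where a: "a \<in> Poly_Mapping.keys h"
      "Poly_Mapping.lookup h a * Poly_Mapping.lookup P (a + c) \<noteq> 0"
    unfolding contract_def by (meson sum.not_neutral_contains_not_neutral)
  then have "a + c \<in> Poly_Mapping.keys P" by (auto simp: in_keys_iff)
  then have "mdeg (a + c) = n" using P by (simp add: homog_def)
  then show ?thesis using in_RdegD[OF h a(1)] by (simp add: mdeg_add)
qed

lemma single_mult_eq_sum:
  "Poly_Mapping.single s 1 * (h :: 'k::comm_ring_1 rpoly) =
    (\<Sum>m\<in>Poly_Mapping.keys h. Poly_Mapping.single (s + m) (Poly_Mapping.lookup h m))"
  by (subst poly_mapping_sum_singles[of h]) (simp add: sum_distrib_left mult_single)

lemma lookup_single_mult: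
  "Poly_Mapping.lookup (Poly_Mapping.single s 1 * (h :: 'k::comm_ring_1 rpoly)) (s + m) =
    Poly_Mapping.lookup h m"
  by (subst poly_mapping_sum_singles[of h])
    (simp add: sum_distrib_left mult_single lookup_sum lookup_single when_def in_keys_iff)

lemma contract_single_mult:
  "contract (Poly_Mapping.single s 1 * (h :: 'k::field rpoly)) P c = contract h P (s + c)"
  unfolding single_mult_eq_sum contract_sum_left contract_single_left
  by (simp add: contract_def ac_simps)

lemma single_mult_Rdeg:
  "h \<in> Rdeg i \<Longrightarrow> Poly_Mapping.single s 1 * (h :: 'k::field rpoly) \<in> Rdeg (mdeg s + i)"
  unfolding single_mult_eq_sum
  by (intro kv.subspace_sum[OF subspace_Rdeg] single_in_Rdeg) (simp add: mdeg_add in_RdegD)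

lemma Ann_iff: "h \<in> Ann P \<longleftrightarrow> (\<forall>c. contract h P c = 0)"
  by (auto simp: Ann_def fun_eq_iff)

lemma subspace_Ann: "kv.subspace (Ann P)"
  unfolding kv.subspace_def
  by (simp add: Ann_iff contract_add_left contract_scale_left kv_forms.linear_0[OF linear_form_contract])

lemma Rdeg_subset_Ann: "homog n P \<Longrightarrow> n < i \<Longrightarrow> Rdeg i \<subseteq> Ann P"
  using contract_nonzero_mdeg by (fastforce simp: Ann_iff)

lemma Ann_Int_Rdeg_top:
  assumes P: "homog n P"
  shows "Ann P \<inter> Rdeg n = Rdeg n \<inter> {h. contract h P 0 = 0}"
proof -
  have "contract h P c = 0" if "h \<in> Rdeg n" "c \<noteq> 0" for h c
    using contract_nonzero_mdeg[OF that(1) P, of c] that(2) mdeg_eq_0_iff[of c] by auto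
  then have "h \<in> Ann P \<longleftrightarrow> contract h P 0 = 0" if "h \<in> Rdeg n" for h
    unfolding Ann_iff using that by metis
  then show ?thesis by blast
qed

lemma nonzero_lookup:
  assumes "P \<noteq> 0"
  obtains m where "Poly_Mapping.lookup P m \<noteq> 0"
  using assms by (metis lookup_zero poly_mapping_eqI)

lemma dim_Ann_top:
  fixes P :: "'k::field dppoly"
  assumes P: "homog n P" "P \<noteq> 0"
  shows "kv.dim (Ann P \<inter> Rdeg n) + 1 = kv.dim (Rdeg n :: 'k rpoly set)"
proof -
  obtain m where m: "Poly_Mapping.lookup P m \<noteq> 0" using P(2) by (rule nonzero_lookup)
  then have "mdeg m = n" using P(1) by (auto simp: homog_def in_keys_iff)
  then have "\<not> Rdeg n \<subseteq> {h. contract h P 0 = 0}"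
    using m single_in_Rdeg[of m n 1] by (auto simp: contract_single_left)
  then have "kv.dim (Rdeg n :: 'k rpoly set) = kv.dim (Rdeg n \<inter> {h. contract h P 0 = 0}) + 1"
    using dim_Int_kernel[OF subspace_Rdeg order_refl linear_form_contract, of n P 0] by simp
  then show ?thesis by (simp add: Ann_Int_Rdeg_top[OF P(1)])
qed

lemma dim_Ann_Int_Ann_top:
  fixes P Q :: "'k::field dppoly"
  assumes P: "homog n P" and Q: "homog n Q" "Q \<noteq> 0"
    and m: "Poly_Mapping.lookup P m \<noteq> 0" "Poly_Mapping.lookup Q m = 0"
  shows "kv.dim (Ann P \<inter> Ann Q \<inter> Rdeg n) + 2 = kv.dim (Rdeg n :: 'k rpoly set)"
proof -
  let ?X = "Ann Q \<inter> Rdeg n"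
  have "mdeg m = n" using P m by (auto simp: homog_def in_keys_iff)
  then have "Poly_Mapping.single m 1 \<in> ?X" "contract (Poly_Mapping.single m 1) P 0 \<noteq> 0"
    using m by (simp_all add: Ann_Int_Rdeg_top[OF Q(1)] single_in_Rdeg contract_single_left)
  then have "\<not> ?X \<subseteq> {h. contract h P 0 = 0}" by blast
  then have "kv.dim ?X = kv.dim (?X \<inter> {h. contract h P 0 = 0}) + 1"
    using dim_Int_kernel[OF kv.subspace_inter[OF subspace_Ann subspace_Rdeg] Int_lower2
        linear_form_contract, of Q n P 0]
    by simp
  also have "?X \<inter> {h. contract h P 0 = 0} = Ann P \<inter> Ann Q \<inter> Rdeg n"
    using Ann_Int_Rdeg_top[OF P] by blast
  finally show ?thesis using dim_Ann_top[OF Q] by simp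
qed

lemma Ann_Int_Rdeg_0:
  assumes "P \<noteq> 0"
  shows "Ann P \<inter> Rdeg 0 = {0 :: 'k::field rpoly}"
proof -
  obtain c where c: "Poly_Mapping.lookup P c \<noteq> 0" using assms by (rule nonzero_lookup)
  have "h = 0" if h: "h \<in> Ann P" "h \<in> Rdeg 0" for h
  proof -
    have keys: "Poly_Mapping.keys h \<subseteq> {0}" using in_RdegD[OF h(2)] mdeg_eq_0_iff by blast
    then have "contract h P c = Poly_Mapping.lookup h 0 * Poly_Mapping.lookup P c"
      by (simp add: contract_superset[of "{0}"])
    then have "Poly_Mapping.lookup h 0 = 0" using h(1) c by (metis (full_types) Ann_iff mult_eq_0_iff)
    then have "Poly_Mapping.keys h = {}" using keys by (auto simp: in_keys_iff simp del: keys_eq_empty)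
    then show "h = 0" by simp
  qed
  moreover have "0 \<in> Ann P \<inter> Rdeg 0"
    using kv.subspace_0[OF subspace_Ann] kv.subspace_0[OF subspace_Rdeg] by blast
  ultimately show ?thesis by blast
qed

lemma contract_zpow:
  assumes h: "h \<in> Rdeg i" and i: "i \<le> n"
  shows "contract h (Poly_Mapping.single (0,0,0,n) v) c =
    (Poly_Mapping.lookup h (0,0,0,i) * v when c = (0,0,0,n - i))"
proof -
  have "a + c = (0,0,0,n) \<longleftrightarrow> a = (0,0,0,i) \<and> c = (0,0,0,n - i)" if "mdeg a = i" for a
    using that i by (cases a; cases c) auto
  then have "contract h (Poly_Mapping.single (0,0,0,n) v) c =
      (\<Sum>a\<in>Poly_Mapping.keys h.
        Poly_Mapping.lookup h a * v when a = (0,0,0,i) \<and> c = (0,0,0,n - i))"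
    unfolding contract_single_right by (intro sum.cong refl) (simp add: in_RdegD[OF h])
  also have "\<dots> = (Poly_Mapping.lookup h (0,0,0,i) * v when c = (0,0,0,n - i))"
    by (auto simp: when_def in_keys_iff)
  finally show ?thesis .
qed

lemma contract_wzpow:
  assumes h: "h \<in> Rdeg i" and i: "1 \<le> i" "i \<le> n"
  shows "contract h (Poly_Mapping.single (1,0,0,n) v) c =
    (Poly_Mapping.lookup h (0,0,0,i) * v when c = (1,0,0,n - i)) +
    (Poly_Mapping.lookup h (1,0,0,i - 1) * v when c = (0,0,0,n + 1 - i))"
proof -
  have "a + c = (1,0,0,n) \<longleftrightarrow>
      a = (0,0,0,i) \<and> c = (1,0,0,n - i) \<or> a = (1,0,0,i - 1) \<and> c = (0,0,0,n + 1 - i)"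
    if "mdeg a = i" for a
    using that i by (cases a; cases c) auto
  then have "contract h (Poly_Mapping.single (1,0,0,n) v) c =
      (\<Sum>a\<in>Poly_Mapping.keys h.
        (Poly_Mapping.lookup h a * v when a = (0,0,0,i) \<and> c = (1,0,0,n - i)) +
        (Poly_Mapping.lookup h a * v when a = (1,0,0,i - 1) \<and> c = (0,0,0,n + 1 - i)))"
    unfolding contract_single_right by (intro sum.cong refl) (auto simp: in_RdegD[OF h] when_def)
  also have "\<dots> = (Poly_Mapping.lookup h (0,0,0,i) * v when c = (1,0,0,n - i)) +
      (Poly_Mapping.lookup h (1,0,0,i - 1) * v when c = (0,0,0,n + 1 - i))"
    by (auto simp: sum.distrib when_def in_keys_iff)
  finally show ?thesis .
qed

lemma lookup_Ann_mult_contract: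
  assumes g: "g \<in> Ann P" and h: "\<And>c. contract h P c = (t when c = d)"
  shows "Poly_Mapping.lookup g d * t = 0"
proof -
  have "Poly_Mapping.lookup g d * t =
      (\<Sum>a\<in>Poly_Mapping.keys g. Poly_Mapping.lookup g a * contract h P a)"
    by (simp add: h when_def if_distrib in_keys_iff cong: if_cong)
  also have "\<dots> = (\<Sum>b\<in>Poly_Mapping.keys h. Poly_Mapping.lookup h b * contract g P b)"
    by (rule contract_symmetric)
  also have "\<dots> = 0" using g by (simp add: Ann_iff)
  finally show ?thesis .
qed

text \<open>In the proof \<open>\<phi>\<close> factors through the map \<open>L\<close> recording \<open>g \<circ> P\<close> in
  degree \<open>i\<close>, and a linear form on such coefficient vectors is pairing with some \<open>h\<close>.\<close>

lemma linear_form_is_contraction: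
  fixes P :: "'k::field dppoly"
  assumes P: "homog (i + m) P" and \<phi>: "linear_form \<phi>"
    and vanish: "\<And>g. g \<in> Ann P \<inter> Rdeg m \<Longrightarrow> \<phi> g = 0"
  obtains h where "h \<in> Rdeg i" "\<And>c. mdeg c = m \<Longrightarrow> contract h P c = \<phi> (Poly_Mapping.single c 1)"
proof -
  let ?B = "{b. mdeg b = i}"
  define L where "L g = (\<Sum>b\<in>?B. pscale (contract g P b) (Poly_Mapping.single b 1))" for g :: "'k rpoly"
  have lookup_L: "Poly_Mapping.lookup (L g) b = (contract g P b when mdeg b = i)" for g b
    by (simp add: L_def lookup_sum lookup_single when_def finite_mdeg_eq if_distrib cong: if_cong)
  have "L (x + y) = L x + L y" "L (pscale t x) = pscale t (L x)" for x y t
    by (simp_all add: poly_mapping_eq_iff fun_eq_iff lookup_L lookup_add contract_add_left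
        contract_scale_left when_def)
  then have L: "Vector_Spaces.linear pscale pscale L"
    by (simp add: Vector_Spaces.linear_iff kv.vector_space_axioms module_hom_iff)
  have "\<phi> g = 0" if g: "g \<in> Rdeg m" "L g = 0" for g
  proof -
    have "contract g P b = 0" for b
      using contract_nonzero_mdeg[OF g(1) P, of b] arg_cong[OF g(2), of "\<lambda>p. Poly_Mapping.lookup p b"]
      by (cases "mdeg b = i") (auto simp: lookup_L)
    then show ?thesis using vanish g(1) by (simp add: Ann_iff)
  qed
  then obtain \<psi> where \<psi>: "linear_form \<psi>" "\<And>g. g \<in> Rdeg m \<Longrightarrow> \<phi> g = \<psi> (L g)"
    using linear_form_factors[OF subspace_Rdeg L \<phi>] by metis
  define h where "h = (\<Sum>b\<in>?B. Poly_Mapping.single b (\<psi> (Poly_Mapping.single b 1)))"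
  show thesis
  proof
    show "h \<in> Rdeg i"
      unfolding h_def by (intro kv.subspace_sum[OF subspace_Rdeg] single_in_Rdeg) simp
    fix c :: mon assume c: "mdeg c = m"
    have "contract h P c = (\<Sum>b\<in>?B. Poly_Mapping.lookup P (b + c) * \<psi> (Poly_Mapping.single b 1))"
      by (simp add: h_def contract_sum_left contract_single_left mult.commute)
    also have "\<dots> = \<psi> (L (Poly_Mapping.single c 1))"
      by (simp add: L_def contract_single_left kv_forms.linear_sum[OF \<psi>(1)]
          kv_forms.linear_scale[OF \<psi>(1)] add.commute)
    also have "\<dots> = \<phi> (Poly_Mapping.single c 1)" using \<psi>(2) c single_in_Rdeg by metis
    finally show "contract h P c = \<phi> (Poly_Mapping.single c 1)" .
  qed
qed

text \<open>\<^const>\<open>Kxyz\<close> also serves for the \<open>W\<close>-free elements of the divided power algebra,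
  which are encoded in the same way.\<close>

lemma Kxyz_add: "p \<in> Kxyz \<Longrightarrow> q \<in> Kxyz \<Longrightarrow> p + q \<in> Kxyz"
  using keys_add[of p q] by (auto simp: Kxyz_def)

lemma single_Kxyz: "fst m = 0 \<Longrightarrow> Poly_Mapping.single m v \<in> Kxyz"
  by (simp add: Kxyz_def)

lemma lookup_Kxyz_W: "P \<in> Kxyz \<Longrightarrow> fst m \<noteq> 0 \<Longrightarrow> Poly_Mapping.lookup P m = 0"
  by (metis (mono_tags) Kxyz_def mem_Collect_eq in_keys_iff)

lemma contract_Kxyz_W: "P \<in> Kxyz \<Longrightarrow> fst c \<noteq> 0 \<Longrightarrow> contract h P c = 0"
  by (simp add: contract_def lookup_Kxyz_W)

lemma single_W_in_Ann: "P \<in> Kxyz \<Longrightarrow> fst a \<noteq> 0 \<Longrightarrow> Poly_Mapping.single a v \<in> Ann P"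
  by (simp add: Ann_iff contract_single_left lookup_Kxyz_W)

section \<open>The invariant \<open>\<alpha>\<close>\<close>

text \<open>Within \<open>R\<^sub>a\<close>, \<open>zpow_free a\<close> is the degree \<open>a\<close> part of the ideal \<open>(w, x, y)\<close>.\<close>

abbreviation zpow_free :: "nat \<Rightarrow> 'k::zero rpoly set" where
  "zpow_free a \<equiv> {h. Poly_Mapping.lookup h (0,0,0,a) = 0}"

lemma ideal_xy_zpow_free: "p \<in> ideal_xy \<Longrightarrow> p \<in> zpow_free a"
proof -
  assume "p \<in> ideal_xy"
  then obtain q r where p: "p = vx * q + vy * r" by (auto simp: ideal_xy_def)
  have "(0,0,0,a) \<notin> Poly_Mapping.keys (vx * q)" "(0,0,0,a) \<notin> Poly_Mapping.keys (vy * r)"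
    using keys_mult[of vx q] keys_mult[of vy r] by (auto simp: vx_def vy_def)
  then show ?thesis by (simp add: p lookup_add in_keys_iff)
qed

lemma ideal_xy_add: "p \<in> ideal_xy \<Longrightarrow> q \<in> ideal_xy \<Longrightarrow> p + q \<in> ideal_xy"
proof -
  assume "p \<in> ideal_xy" "q \<in> ideal_xy"
  then obtain p1 p2 q1 q2 where "p = vx * p1 + vy * p2" "q = vx * q1 + vy * q2"
    and "p1 \<in> Kxyz" "p2 \<in> Kxyz" "q1 \<in> Kxyz" "q2 \<in> Kxyz"
    by (auto simp: ideal_xy_def)
  then show ?thesis
    unfolding ideal_xy_def
    by (intro CollectI exI[of _ "p1 + q1"] exI[of _ "p2 + q2"]) (simp add: Kxyz_add algebra_simps)
qed

lemma single_in_ideal_xy: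
  assumes m: "m = (0, b, c, d)" "b \<noteq> 0 \<or> c \<noteq> 0"
  shows "Poly_Mapping.single m v \<in> ideal_xy"
proof -
  have "Poly_Mapping.single m v = vx * Poly_Mapping.single (0, b - 1, c, d) v + vy * 0 \<or>
      Poly_Mapping.single m v = vx * 0 + vy * Poly_Mapping.single (0, b, c - 1, d) v"
    using m by (auto simp: vx_def vy_def mult_single)
  moreover have "0 \<in> Kxyz" by (simp add: Kxyz_def)
  ultimately show ?thesis unfolding ideal_xy_def using single_Kxyz[of "(0, _, _, _)" v] by fastforce
qed

lemma Kxyz_Rdeg_zpow_free_in_ideal_xy:
  assumes h: "h \<in> Kxyz" "h \<in> Rdeg a" "h \<in> zpow_free a"
  shows "h \<in> ideal_xy"
proof -
  have zero: "0 \<in> ideal_xy"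
    unfolding ideal_xy_def Kxyz_def by (intro CollectI exI[of _ 0]) simp
  have "Poly_Mapping.single m (Poly_Mapping.lookup h m) \<in> ideal_xy" if m: "m \<in> Poly_Mapping.keys h" for m
  proof -
    obtain w b c d where md: "m = (w, b, c, d)" by (cases m)
    have "w = 0" using h(1) m md by (auto simp: Kxyz_def)
    moreover have "m \<noteq> (0,0,0,a)" using h(3) m by (auto simp: in_keys_iff)
    moreover have "mdeg m = a" using in_RdegD[OF h(2) m] .
    ultimately show ?thesis using md by (intro single_in_ideal_xy) auto
  qed
  then have "(\<Sum>m\<in>Poly_Mapping.keys h. Poly_Mapping.single m (Poly_Mapping.lookup h m)) \<in> ideal_xy"
    by (induction rule: finite_subset_induct[OF finite_keys subset_refl]) (auto intro: zero ideal_xy_add)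
  then show ?thesis by (simp flip: poly_mapping_sum_singles)
qed

definition wfree_part :: "'k::zero rpoly \<Rightarrow> 'k rpoly" where
  "wfree_part h = Poly_Mapping.mapp (\<lambda>m v. v when fst m = 0) h"

lemma lookup_wfree_part: "Poly_Mapping.lookup (wfree_part h) m = (Poly_Mapping.lookup h m when fst m = 0)"
  by (simp add: wfree_part_def lookup_mapp when_def in_keys_iff)

lemma wfree_part_Kxyz: "wfree_part h \<in> Kxyz"
  by (auto simp: Kxyz_def in_keys_iff lookup_wfree_part)

lemma wfree_part_Rdeg: "h \<in> Rdeg a \<Longrightarrow> wfree_part h \<in> Rdeg a"
  using keys_mapp_subset by (fastforce simp: Rdeg_def homog_def wfree_part_def)

lemma contract_wfree_part:
  assumes P: "P \<in> Kxyz"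
  shows "contract (wfree_part h) P c = contract h P c"
proof -
  have "contract (wfree_part h) P c =
      (\<Sum>a\<in>Poly_Mapping.keys h. Poly_Mapping.lookup (wfree_part h) a * Poly_Mapping.lookup P (a + c))"
    by (rule contract_superset) (auto simp: wfree_part_def intro: subsetD[OF keys_mapp_subset])
  also have "\<dots> = contract h P c"
    unfolding contract_def using lookup_Kxyz_W[OF P]
    by (intro sum.cong refl) (auto simp: lookup_wfree_part when_def)
  finally show ?thesis .
qed

lemma alpha_Ann:
  assumes P: "P \<in> Kxyz"
  shows "alpha (Ann P) = (LEAST a. 1 \<le> a \<and> \<not> Ann P \<inter> Rdeg a \<subseteq> zpow_free a)"
proof -
  have "Ann P \<inter> Kxyz \<inter> Rdeg a \<subseteq> ideal_xy \<longleftrightarrow> Ann P \<inter> Rdeg a \<subseteq> zpow_free a" for a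
  proof
    assume sub: "Ann P \<inter> Kxyz \<inter> Rdeg a \<subseteq> ideal_xy"
    show "Ann P \<inter> Rdeg a \<subseteq> zpow_free a"
    proof
      fix h assume h: "h \<in> Ann P \<inter> Rdeg a"
      then have "wfree_part h \<in> Ann P \<inter> Kxyz \<inter> Rdeg a"
        using contract_wfree_part[OF P] by (simp add: Ann_iff wfree_part_Kxyz wfree_part_Rdeg)
      then have "wfree_part h \<in> zpow_free a" using sub ideal_xy_zpow_free by blast
      then show "h \<in> zpow_free a" by (simp add: lookup_wfree_part)
    qed
  qed (use Kxyz_Rdeg_zpow_free_in_ideal_xy in blast)
  then show ?thesis by (simp add: alpha_def)
qed

lemma Ann_Rdeg_not_zpow_free_mono:
  assumes a: "\<not> Ann P \<inter> Rdeg a \<subseteq> zpow_free a" and ab: "a \<le> b"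
  shows "\<not> Ann (P :: 'k::field dppoly) \<inter> Rdeg b \<subseteq> zpow_free b"
proof -
  obtain h where h: "h \<in> Ann P" "h \<in> Rdeg a" "h \<notin> zpow_free a" using a by blast
  let ?s = "(0, 0, 0, b - a)" and ?h = "Poly_Mapping.single (0, 0, 0, b - a) 1 * h"
  have "?h \<in> Ann P" using h(1) by (simp add: Ann_iff contract_single_mult)
  moreover have "?h \<in> Rdeg b" using single_mult_Rdeg[OF h(2), of ?s] ab by simp
  moreover have "?h \<notin> zpow_free b" using h(3) lookup_single_mult[of ?s h "(0,0,0,a)"] ab by simp
  ultimately show ?thesis by blast
qed

lemma Ann_Rdeg_above_not_zpow_free:
  assumes "homog n P"
  shows "\<not> Ann (P :: 'k::field dppoly) \<inter> Rdeg (Suc n) \<subseteq> zpow_free (Suc n)"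
proof -
  have "Poly_Mapping.single (0,0,0,Suc n) 1 \<in> Ann P \<inter> Rdeg (Suc n)"
    using Rdeg_subset_Ann[OF assms] single_in_Rdeg[of "(0,0,0,Suc n)"] by auto
  then show ?thesis by auto
qed

lemma alpha_le_iff:
  assumes P: "P \<in> Kxyz" "homog n P" and a: "1 \<le> a"
  shows "alpha (Ann P) \<le> a \<longleftrightarrow> \<not> Ann (P :: 'k::field dppoly) \<inter> Rdeg a \<subseteq> zpow_free a"
proof
  have ex: "1 \<le> Suc n \<and> \<not> Ann P \<inter> Rdeg (Suc n) \<subseteq> zpow_free (Suc n)"
    using Ann_Rdeg_above_not_zpow_free[OF P(2)] by simp
  assume "alpha (Ann P) \<le> a"
  moreover have "1 \<le> alpha (Ann P) \<and> \<not> Ann P \<inter> Rdeg (alpha (Ann P)) \<subseteq> zpow_free (alpha (Ann P))"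
    unfolding alpha_Ann[OF P(1)] by (rule LeastI) (rule ex)
  ultimately show "\<not> Ann P \<inter> Rdeg a \<subseteq> zpow_free a" using Ann_Rdeg_not_zpow_free_mono by blast
qed (use a in \<open>simp add: alpha_Ann[OF P(1)] Least_le\<close>)

lemma one_le_alpha: "P \<in> Kxyz \<Longrightarrow> homog n P \<Longrightarrow> 1 \<le> alpha (Ann (P :: 'k::field dppoly))"
  unfolding alpha_Ann by (rule LeastI2_wellorder[of _ "Suc n"]) (auto dest: Ann_Rdeg_above_not_zpow_free)

section \<open>Adding a multiple of \<open>Z\<^bsup>[j]\<^esup>\<close> to the dual generator\<close>

lemma homog_add: "homog n p \<Longrightarrow> homog n q \<Longrightarrow> homog n (p + q)"
  using keys_add[of p q] by (auto simp: homog_def)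

lemma homog_single: "mdeg m = n \<Longrightarrow> homog n (Poly_Mapping.single m v)"
  by (simp add: homog_def)

abbreviation wzpow_free :: "nat \<Rightarrow> 'k::zero rpoly set" where
  "wzpow_free a \<equiv> {h. Poly_Mapping.lookup h (1,0,0,a-1) = 0}"

lemma Ann_add_zpow_Int_zpow_free:
  assumes "i \<le> n"
  shows "Ann (P + Poly_Mapping.single (0,0,0,n) v) \<inter> Rdeg i \<inter> zpow_free i = Ann P \<inter> Rdeg i \<inter> zpow_free i"
  using assms by (auto simp: Ann_iff contract_add_right contract_zpow)

definition Ann_mod_W :: "'k::comm_ring_1 dppoly \<Rightarrow> 'k rpoly set" where
  "Ann_mod_W P = {h. \<forall>c. fst c = 0 \<longrightarrow> contract h P c = 0}"

lemma subspace_Ann_mod_W: "kv.subspace (Ann_mod_W P)"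
  unfolding kv.subspace_def Ann_mod_W_def
  by (simp add: contract_add_left contract_scale_left kv_forms.linear_0[OF linear_form_contract])

lemma Ann_subset_Ann_mod_W: "Ann P \<subseteq> Ann_mod_W P"
  by (auto simp: Ann_iff Ann_mod_W_def)

locale dual_generator =
  fixes G :: "'k::field dppoly" and j :: nat
  assumes G_Kxyz: "G \<in> Kxyz" and G_homog: "homog j G"
    and G_not_zpow: "\<And>c. G \<noteq> Poly_Mapping.single (0,0,0,j) c"
begin

definition G_lam :: "'k \<Rightarrow> 'k dppoly" where
  "G_lam lam = G + Poly_Mapping.single (0,0,0,j) lam"

definition F_lam :: "'k \<Rightarrow> 'k dppoly" where
  "F_lam lam = G + Poly_Mapping.single (1,0,0,j-1) 1 + Poly_Mapping.single (0,0,0,j) lam"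

abbreviation alphaG :: nat where
  "alphaG \<equiv> alpha (Ann G)"

lemma G_non_zpow_monomial:
  obtains m where "Poly_Mapping.lookup G m \<noteq> 0" "m \<noteq> (0,0,0,j)"
proof -
  let ?Z = "Poly_Mapping.single (0,0,0,j) (Poly_Mapping.lookup G (0,0,0,j))"
  obtain m where "Poly_Mapping.lookup G m \<noteq> Poly_Mapping.lookup ?Z m"
    using G_not_zpow poly_mapping_eqI by metis
  then show thesis by (intro that[of m]) (auto simp: lookup_single when_def split: if_splits)
qed

lemma one_le_j: "1 \<le> j"
proof -
  obtain m where m: "Poly_Mapping.lookup G m \<noteq> 0" "m \<noteq> (0,0,0,j)" by (rule G_non_zpow_monomial)
  then have "mdeg m = j" using G_homog by (auto simp: homog_def in_keys_iff)
  then show ?thesis using m(2) by (cases m) auto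
qed

lemma G_lam_0 [simp]: "G_lam 0 = G"
  by (simp add: G_lam_def)

lemma F_lam_eq: "F_lam lam = G_lam lam + Poly_Mapping.single (1,0,0,j-1) 1"
  by (simp add: F_lam_def G_lam_def ac_simps)

lemma G_lam_Kxyz: "G_lam lam \<in> Kxyz"
  unfolding G_lam_def by (intro Kxyz_add G_Kxyz single_Kxyz) simp

lemma homog_G_lam: "homog j (G_lam lam)"
  unfolding G_lam_def by (intro homog_add G_homog homog_single) simp

lemma homog_F_lam: "homog j (F_lam lam)"
  unfolding F_lam_eq using one_le_j by (intro homog_add homog_G_lam homog_single) simp

lemma lookup_F_lam_W: "Poly_Mapping.lookup (F_lam lam) (1,0,0,j-1) = 1"
  using lookup_Kxyz_W[OF G_lam_Kxyz] by (simp add: F_lam_eq lookup_add lookup_single)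

lemma G_lam_nonzero: "G_lam lam \<noteq> 0"
proof -
  obtain m where "Poly_Mapping.lookup G m \<noteq> 0" "m \<noteq> (0,0,0,j)" by (rule G_non_zpow_monomial)
  then have "Poly_Mapping.lookup (G_lam lam) m \<noteq> 0" by (simp add: G_lam_def lookup_add lookup_single)
  then show ?thesis by auto
qed

lemma F_lam_nonzero: "F_lam lam \<noteq> 0"
  using lookup_F_lam_W[of lam] by auto

lemma contract_G_lam:
  assumes "h \<in> Rdeg i" "i \<le> j"
  shows "contract h (G_lam lam) c =
    contract h G c + (Poly_Mapping.lookup h (0,0,0,i) * lam when c = (0,0,0,j-i))"
  using assms by (simp add: G_lam_def contract_add_right contract_zpow)

lemma contract_F_lam:
  assumes h: "h \<in> Rdeg i" and i: "1 \<le> i" "i < j"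
  shows "contract h (F_lam lam) c = contract h (G_lam lam) c +
    (Poly_Mapping.lookup h (0,0,0,i) when c = (1,0,0,j-1-i)) +
    (Poly_Mapping.lookup h (1,0,0,i-1) when c = (0,0,0,j-i))"
proof -
  have "j - 1 + 1 - i = j - i" using i by simp
  then show ?thesis
    using contract_wzpow[OF h i(1), of "j - 1" 1 c] i by (simp add: F_lam_eq contract_add_right add.assoc)
qed

lemma Ann_F_lam_zpow_free:
  assumes "i < j"
  shows "Ann (F_lam lam) \<inter> Rdeg i \<subseteq> zpow_free i"
proof
  fix h assume h: "h \<in> Ann (F_lam lam) \<inter> Rdeg i"
  let ?c = "(1::nat, 0::nat, 0::nat, j - 1 - i)"
  have "(1,0,0,j-1) = (0,0,0,i) + ?c" using assms by simp
  then have "contract h (F_lam lam) ?c =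
      contract h (G_lam lam) ?c + contract h (Poly_Mapping.single ((0,0,0,i) + ?c) 1) ?c"
    by (simp add: F_lam_eq contract_add_right)
  also have "\<dots> = Poly_Mapping.lookup h (0,0,0,i)"
    using contract_Kxyz_W[OF G_lam_Kxyz, of ?c h lam] contract_single_hit[of h "(0,0,0,i)" ?c 1] by simp
  finally have "contract h (F_lam lam) ?c = Poly_Mapping.lookup h (0,0,0,i)" .
  then show "h \<in> zpow_free i" using h by (simp add: Ann_iff)
qed

lemma Ann_F_lam_Int_Rdeg_low:
  assumes "i < j"
  shows "Ann (F_lam lam) \<inter> Rdeg i = Ann (F_lam 0) \<inter> Rdeg i"
    and "Ann (F_lam lam) \<inter> Ann (G_lam lam) \<inter> Rdeg i = Ann (F_lam 0) \<inter> Ann G \<inter> Rdeg i"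
proof -
  let ?F = "G + Poly_Mapping.single (1,0,0,j-1) 1"
  have ij: "i \<le> j" using assms by simp
  have F: "Ann (F_lam mu) \<inter> Rdeg i = Ann ?F \<inter> Rdeg i \<inter> zpow_free i" for mu
    using Ann_F_lam_zpow_free[OF assms, of mu] Ann_add_zpow_Int_zpow_free[OF ij, of ?F mu]
    unfolding F_lam_def by blast
  then show "Ann (F_lam lam) \<inter> Rdeg i = Ann (F_lam 0) \<inter> Rdeg i" by simp
  have "Ann (G_lam mu) \<inter> Rdeg i \<inter> zpow_free i = Ann G \<inter> Rdeg i \<inter> zpow_free i" for mu
    using Ann_add_zpow_Int_zpow_free[OF ij, of G mu] unfolding G_lam_def .
  then show "Ann (F_lam lam) \<inter> Ann (G_lam lam) \<inter> Rdeg i = Ann (F_lam 0) \<inter> Ann G \<inter> Rdeg i"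
    using F[of lam] F[of 0] by blast
qed

lemma Ann_Int_Rdeg_high:
  assumes "j < i"
  shows "Ann (F_lam lam) \<inter> Rdeg i = Rdeg i" "Ann (G_lam lam) \<inter> Rdeg i = Rdeg i" "Ann G \<inter> Rdeg i = Rdeg i"
  using Rdeg_subset_Ann[OF homog_F_lam assms] Rdeg_subset_Ann[OF homog_G_lam assms]
    Rdeg_subset_Ann[OF G_homog assms] by blast+

lemma lookup_W_F_lam_G_lam:
  "Poly_Mapping.lookup (F_lam lam) (1,0,0,j-1) \<noteq> 0" "Poly_Mapping.lookup (G_lam lam) (1,0,0,j-1) = 0"
  using lookup_F_lam_W lookup_Kxyz_W[OF G_lam_Kxyz] by simp_all

lemma dim_Ann_F_lam_Rdeg: "kv.dim (Ann (F_lam lam) \<inter> Rdeg i) = kv.dim (Ann (F_lam 0) \<inter> Rdeg i)"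
proof -
  consider "i < j" | "i = j" | "j < i" by linarith
  then show ?thesis
  proof cases
    case 1
    then show ?thesis by (simp only: Ann_F_lam_Int_Rdeg_low(1)[OF 1, of lam])
  next
    case 2
    then show ?thesis using dim_Ann_top[OF homog_F_lam F_lam_nonzero] by (metis add_right_cancel)
  next
    case 3
    then show ?thesis by (simp add: Ann_Int_Rdeg_high)
  qed
qed

lemma dim_Ann_F_lam_Int_Ann_G_lam_Rdeg:
  "kv.dim (Ann (F_lam lam) \<inter> Ann (G_lam lam) \<inter> Rdeg i) = kv.dim (Ann (F_lam 0) \<inter> Ann G \<inter> Rdeg i)"
proof -
  consider "i < j" | "i = j" | "j < i" by linarith
  then show ?thesis
  proof cases
    case 2
    then show ?thesis
      using dim_Ann_Int_Ann_top[OF homog_F_lam homog_G_lam G_lam_nonzero lookup_W_F_lam_G_lam]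
      by (metis G_lam_0 add_right_cancel)
  next
    case 3
    then show ?thesis using Ann_Int_Rdeg_high[OF 3] by (simp add: Int_assoc)
  qed (simp add: Ann_F_lam_Int_Rdeg_low)
qed

lemma one_le_alphaG: "1 \<le> alphaG"
  by (rule one_le_alpha[OF G_Kxyz G_homog])

lemma Ann_G_Rdeg_zpow_free:
  assumes "i < alphaG"
  shows "Ann G \<inter> Rdeg i \<subseteq> zpow_free i"
proof (cases "i = 0")
  case True
  have "G \<noteq> 0" using G_lam_nonzero[of 0] by simp
  then show ?thesis using True Ann_Int_Rdeg_0[of G] by auto
next
  case False
  then show ?thesis using assms alpha_le_iff[OF G_Kxyz G_homog, of i] by simp
qed

lemma Ann_G_Rdeg_not_zpow_free: "alphaG \<le> i \<Longrightarrow> \<not> Ann G \<inter> Rdeg i \<subseteq> zpow_free i"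
  using alpha_le_iff[OF G_Kxyz G_homog, of i] one_le_alphaG by simp

lemma contract_G_zpow_eq_0:
  assumes "alphaG \<le> m" and h: "\<And>c. contract h G c = (t when c = (0,0,0,m))"
  shows "t = 0"
proof -
  obtain g where "g \<in> Ann G" "Poly_Mapping.lookup g (0,0,0,m) \<noteq> 0"
    using Ann_G_Rdeg_not_zpow_free[OF assms(1)] by blast
  then show ?thesis using lookup_Ann_mult_contract[OF _ h] by auto
qed

lemma exists_contract_G_zpow:
  assumes "i \<le> j" "j - i < alphaG"
  obtains h where "h \<in> Rdeg i" "\<And>c. contract h G c = (1 when c = (0,0,0,j-i))"
proof -
  have "homog (i + (j - i)) G" using assms G_homog by simp
  moreover have "\<And>g. g \<in> Ann G \<inter> Rdeg (j - i) \<Longrightarrow> Poly_Mapping.lookup g (0,0,0,j-i) = 0"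
    using Ann_G_Rdeg_zpow_free[OF assms(2)] by blast
  ultimately obtain h where h: "h \<in> Rdeg i"
    "\<And>c. mdeg c = j - i \<Longrightarrow>
      contract h G c = Poly_Mapping.lookup (Poly_Mapping.single c 1) (0,0,0,j-i)"
    by (rule linear_form_is_contraction[OF _ linear_form_lookup]) blast+
  have "contract h G c = (1 when c = (0,0,0,j-i))" for c
  proof (cases "mdeg c = j - i")
    case False
    then have "contract h G c = 0" using contract_nonzero_mdeg[OF h(1) G_homog, of c] assms(1) by linarith
    then show ?thesis using False by (auto simp: when_def)
  qed (simp add: h(2) lookup_single)
  with h(1) show thesis by (rule that)
qed

lemma Ann_G_lam_Rdeg_zpow_free:
  assumes "lam \<noteq> 0" "i \<le> j" "alphaG \<le> j - i"
  shows "Ann (G_lam lam) \<inter> Rdeg i \<subseteq> zpow_free i"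
proof
  fix h assume h: "h \<in> Ann (G_lam lam) \<inter> Rdeg i"
  then have sum0: "contract h G c + (Poly_Mapping.lookup h (0,0,0,i) * lam when c = (0,0,0,j-i)) = 0" for c
    using contract_G_lam[of h i lam c] assms(2) by (simp add: Ann_iff)
  have "contract h G c = (- (Poly_Mapping.lookup h (0,0,0,i) * lam) when c = (0,0,0,j-i))" for c
    using sum0[of c] by (cases "c = (0,0,0,j-i)") (simp_all add: eq_neg_iff_add_eq_0)
  then have "Poly_Mapping.lookup h (0,0,0,i) * lam = 0"
    using contract_G_zpow_eq_0[OF assms(3)] by fastforce
  then show "h \<in> zpow_free i" using assms(1) by simp
qed

lemma Ann_G_lam_Rdeg_not_zpow_free:
  assumes "alphaG \<le> i" "i \<le> j" "j - i < alphaG"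
  shows "\<not> Ann (G_lam lam) \<inter> Rdeg i \<subseteq> zpow_free i"
proof -
  let ?\<zeta> = "\<lambda>h. Poly_Mapping.lookup h (0,0,0,i)"
  obtain k where k: "k \<in> Ann G" "k \<in> Rdeg i" "?\<zeta> k \<noteq> 0"
    using Ann_G_Rdeg_not_zpow_free[OF assms(1)] by blast
  obtain h1 where h1: "h1 \<in> Rdeg i" "\<And>c. contract h1 G c = (1 when c = (0,0,0,j-i))"
    using exists_contract_G_zpow[OF assms(2,3)] by blast
  \<comment> \<open>\<open>h2 \<circ> G = Z\<^bsup>[j-i]\<^esup>\<close> cancels the term \<open>\<lambda> \<zeta>(k) Z\<^bsup>[j-i]\<^esup>\<close> of \<open>k \<circ> G_lam \<lambda>\<close>\<close>
  define h2 where "h2 = h1 - pscale (?\<zeta> h1 / ?\<zeta> k) k"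
  define u where "u = k - pscale (lam * ?\<zeta> k) h2"
  have h2: "h2 \<in> Rdeg i" "?\<zeta> h2 = 0" "\<And>c. contract h2 G c = (1 when c = (0,0,0,j-i))"
    using h1 k by (simp_all add: h2_def kv.subspace_diff kv.subspace_scale subspace_Rdeg lookup_minus
        contract_diff_left contract_scale_left Ann_iff)
  have u: "u \<in> Rdeg i" "?\<zeta> u = ?\<zeta> k"
    using h2 k by (simp_all add: u_def kv.subspace_diff kv.subspace_scale subspace_Rdeg lookup_minus)
  have "contract u (G_lam lam) c = 0" for c
    using k h2 u assms(2)
    by (simp add: contract_G_lam u_def contract_diff_left contract_scale_left Ann_iff when_def)
  then have "u \<in> Ann (G_lam lam) \<inter> Rdeg i" using u(1) by (simp add: Ann_iff)
  then show ?thesis using u(2) k(3) by auto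
qed

lemma dim_Ann_G_lam:
  assumes lam: "lam \<noteq> 0" and aj: "2 * alphaG \<le> j"
  shows "kv.dim (Ann G \<inter> Rdeg i) =
    kv.dim (Ann (G_lam lam) \<inter> Rdeg i) + (if alphaG \<le> i \<and> i \<le> j - alphaG then 1 else 0)"
proof (cases "i \<le> j")
  case True
  let ?dim_split = "\<lambda>X. kv.dim X = kv.dim (X \<inter> zpow_free i) + (if X \<subseteq> zpow_free i then 0 else 1)"
  have "?dim_split (Ann P \<inter> Rdeg i)" for P :: "'k dppoly"
    using dim_Int_kernel[OF kv.subspace_inter[OF subspace_Ann subspace_Rdeg] Int_lower2 linear_form_lookup] .
  moreover have "Ann (G_lam lam) \<inter> Rdeg i \<inter> zpow_free i = Ann G \<inter> Rdeg i \<inter> zpow_free i"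
    using Ann_add_zpow_Int_zpow_free[OF True] unfolding G_lam_def .
  moreover have "Ann G \<inter> Rdeg i \<subseteq> zpow_free i \<longleftrightarrow> i < alphaG"
    using Ann_G_Rdeg_zpow_free Ann_G_Rdeg_not_zpow_free by (meson not_le)
  moreover have "Ann (G_lam lam) \<inter> Rdeg i \<subseteq> zpow_free i \<longleftrightarrow> alphaG \<le> j - i"
    using Ann_G_lam_Rdeg_zpow_free[OF lam True] Ann_G_lam_Rdeg_not_zpow_free[OF _ True] aj by force
  ultimately show ?thesis using aj True one_le_alphaG by auto
next
  case False
  then have "j < i" by simp
  with Ann_Int_Rdeg_high[OF this] show ?thesis by auto
qed

lemma alpha_G_lam:
  assumes lam: "lam \<noteq> 0" and aj: "2 * alphaG \<le> j"
  shows "alpha (Ann (G_lam lam)) = j + 1 - alphaG"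
proof (rule antisym)
  note alpha_le = alpha_le_iff[OF G_lam_Kxyz homog_G_lam]
  show "alpha (Ann (G_lam lam)) \<le> j + 1 - alphaG"
    using alpha_le Ann_G_lam_Rdeg_not_zpow_free one_le_alphaG aj by simp
  have "\<not> alpha (Ann (G_lam lam)) \<le> j - alphaG"
    using alpha_le Ann_G_lam_Rdeg_zpow_free[OF lam] one_le_alphaG aj by simp
  then show "j + 1 - alphaG \<le> alpha (Ann (G_lam lam))" by simp
qed

lemma contract_F_lam_W_free:
  assumes h: "h \<in> Rdeg i" and i: "1 \<le> i" "i < j" and c: "fst c = 0"
  shows "contract h (F_lam lam) c =
    contract h G c + (Poly_Mapping.lookup h (0,0,0,i) * lam + Poly_Mapping.lookup h (1,0,0,i-1)
      when c = (0,0,0,j-i))"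
  using c contract_F_lam[OF h i] contract_G_lam[OF h] i by (auto simp: when_def)

lemma Ann_F_lam_Rdeg_eq:
  assumes i: "1 \<le> i" "i < j"
  shows "Ann (F_lam lam) \<inter> Rdeg i = Ann_mod_W (F_lam lam) \<inter> Rdeg i \<inter> zpow_free i"
proof -
  have "h \<in> Ann (F_lam lam)" if h: "h \<in> Ann_mod_W (F_lam lam)" "h \<in> Rdeg i" "h \<in> zpow_free i" for h
  proof -
    have "contract h (F_lam lam) c = 0" if "fst c \<noteq> 0" for c
      using that h(3) contract_F_lam[OF h(2) i, of lam c] contract_Kxyz_W[OF G_lam_Kxyz]
      by (auto simp: when_def)
    then show ?thesis using h(1) unfolding Ann_iff Ann_mod_W_def by blast
  qed
  then show ?thesis using Ann_subset_Ann_mod_W Ann_F_lam_zpow_free[OF i(2)] by blast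
qed

lemma Ann_mod_W_F_lam_Int_wzpow_free:
  assumes i: "1 \<le> i" "i < j"
  shows "Ann_mod_W (F_lam lam) \<inter> Rdeg i \<inter> wzpow_free i = Ann (G_lam lam) \<inter> Rdeg i \<inter> wzpow_free i"
proof -
  have "h \<in> Ann_mod_W (F_lam lam) \<longleftrightarrow> h \<in> Ann (G_lam lam)" if h: "h \<in> Rdeg i" "h \<in> wzpow_free i" for h
  proof -
    have "contract h (F_lam lam) c = contract h (G_lam lam) c" if "fst c = 0" for c
      using that h(2) contract_F_lam[OF h(1) i, of lam c] by (auto simp: when_def)
    then have "contract h (G_lam lam) c = 0 \<longleftrightarrow> fst c \<noteq> 0 \<or> contract h (F_lam lam) c = 0" for c
      using contract_Kxyz_W[OF G_lam_Kxyz, of c h lam] by (cases "fst c = 0") auto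
    then show ?thesis unfolding Ann_iff Ann_mod_W_def by blast
  qed
  then show ?thesis by blast
qed

lemma Ann_mod_W_F_lam_zpow_free_iff_wzpow_free:
  assumes lam: "lam \<noteq> 0" and aj: "2 * alphaG \<le> j" and i: "1 \<le> i" "i < j"
  shows "Ann_mod_W (F_lam lam) \<inter> Rdeg i \<subseteq> zpow_free i \<longleftrightarrow>
    Ann_mod_W (F_lam lam) \<inter> Rdeg i \<subseteq> wzpow_free i"
proof (cases "alphaG \<le> i")
  case True
  let ?\<zeta> = "\<lambda>h. Poly_Mapping.lookup h (0,0,0,i)"
    and ?\<omega> = "\<lambda>h. Poly_Mapping.lookup h (1,0,0,i-1)"
  let ?e = "Poly_Mapping.single (1,0,0,i-1) 1 :: 'k rpoly"
  obtain k where k: "k \<in> Ann G" "k \<in> Rdeg i" "?\<zeta> k \<noteq> 0"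
    using Ann_G_Rdeg_not_zpow_free[OF True] by blast
  define u where "u = k - pscale (lam * ?\<zeta> k + ?\<omega> k) ?e"
  have e: "?e \<in> Rdeg i" "?\<zeta> ?e = 0" "?\<omega> ?e = 1" "\<And>c. contract ?e G c = 0"
    using i single_in_Rdeg[of "(1,0,0,i-1)" i] single_W_in_Ann[OF G_Kxyz, of "(1,0,0,i-1)" 1]
    by (simp_all add: lookup_single when_def Ann_iff)
  have u: "u \<in> Rdeg i" "?\<zeta> u = ?\<zeta> k" "?\<omega> u = - (lam * ?\<zeta> k)"
    using k e by (simp_all add: u_def kv.subspace_diff kv.subspace_scale subspace_Rdeg lookup_minus)
  have "contract u (F_lam lam) c = 0" if "fst c = 0" for c
    using contract_F_lam_W_free[OF u(1) i that] k e u i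
    by (simp add: u_def contract_diff_left contract_scale_left Ann_iff)
  then have "u \<in> Ann_mod_W (F_lam lam) \<inter> Rdeg i" using u(1) by (simp add: Ann_mod_W_def)
  then show ?thesis using u k(3) lam by auto
next
  case False
  have "h \<in> zpow_free i \<inter> wzpow_free i" if h: "h \<in> Ann_mod_W (F_lam lam)" "h \<in> Rdeg i" for h
  proof -
    let ?t = "- (Poly_Mapping.lookup h (0,0,0,i) * lam + Poly_Mapping.lookup h (1,0,0,i-1))"
    have "contract h G c = (?t when c = (0,0,0,j-i))" for c
    proof (cases "fst c = 0")
      case True
      then have "contract h G c + (Poly_Mapping.lookup h (0,0,0,i) * lam +
          Poly_Mapping.lookup h (1,0,0,i-1) when c = (0,0,0,j-i)) = 0"
        using h contract_F_lam_W_free[OF h(2) i True, of lam] by (simp add: Ann_mod_W_def)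
      then have "contract h G c = - (Poly_Mapping.lookup h (0,0,0,i) * lam +
          Poly_Mapping.lookup h (1,0,0,i-1) when c = (0,0,0,j-i))"
        by (simp only: eq_neg_iff_add_eq_0)
      then show ?thesis by (simp add: when_def)
    qed (auto simp: contract_Kxyz_W[OF G_Kxyz] when_def)
    moreover have "alphaG \<le> j - i" using False aj by simp
    ultimately have "?t = 0" by (rule contract_G_zpow_eq_0[rotated])
    then have "h \<in> Ann G" using \<open>\<And>c. contract h G c = _\<close> by (simp add: Ann_iff)
    then have "h \<in> zpow_free i" using Ann_G_Rdeg_zpow_free[of i] False h(2) by auto
    then show ?thesis using \<open>?t = 0\<close> by simp
  qed
  then show ?thesis by blast
qed

lemma dim_Ann_F_lam_middle:
  assumes lam: "lam \<noteq> 0" and aj: "2 * alphaG \<le> j" and i: "1 \<le> i" "i < j"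
  shows "kv.dim (Ann (G_lam lam) \<inter> Rdeg i) = kv.dim (Ann (F_lam lam) \<inter> Rdeg i) + 1"
proof -
  let ?Q = "Ann_mod_W (F_lam lam) \<inter> Rdeg i" and ?e = "Poly_Mapping.single (1,0,0,i-1) 1 :: 'k rpoly"
  have Q: "kv.subspace ?Q" "?Q \<subseteq> Rdeg i" by (auto intro: kv.subspace_inter subspace_Ann_mod_W subspace_Rdeg)
  have "?e \<in> Ann (G_lam lam) \<inter> Rdeg i" "?e \<notin> wzpow_free i"
    using single_W_in_Ann[OF G_lam_Kxyz, of "(1,0,0,i-1)" 1] single_in_Rdeg[of "(1,0,0,i-1)" i] i
    by (simp_all add: lookup_single)
  then have "kv.dim (Ann (G_lam lam) \<inter> Rdeg i) = kv.dim (Ann (G_lam lam) \<inter> Rdeg i \<inter> wzpow_free i) + 1"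
    using dim_Int_kernel[OF kv.subspace_inter[OF subspace_Ann subspace_Rdeg] Int_lower2 linear_form_lookup,
        of "G_lam lam" i "(1,0,0,i-1)"] by auto
  also have "\<dots> = kv.dim (?Q \<inter> wzpow_free i) + 1"
    using Ann_mod_W_F_lam_Int_wzpow_free[OF i] by simp
  also have "\<dots> = kv.dim (?Q \<inter> zpow_free i) + 1"
    using dim_Int_kernel[OF Q linear_form_lookup, of "(1,0,0,i-1)"]
      dim_Int_kernel[OF Q linear_form_lookup, of "(0,0,0,i)"]
      Ann_mod_W_F_lam_zpow_free_iff_wzpow_free[OF lam aj i] by simp
  finally show ?thesis using Ann_F_lam_Rdeg_eq[OF i] by simp
qed

lemma dim_Ann_F_lam:
  assumes lam: "lam \<noteq> 0" and aj: "2 * alphaG \<le> j"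
  shows "kv.dim (Ann (G_lam lam) \<inter> Rdeg i) =
    kv.dim (Ann (F_lam lam) \<inter> Rdeg i) + (if 1 \<le> i \<and> i \<le> j - 1 then 1 else 0)"
proof -
  consider "i = 0" | "1 \<le> i" "i < j" | "i = j" | "j < i" using one_le_j by linarith
  then show ?thesis
  proof cases
    case 1
    then show ?thesis using Ann_Int_Rdeg_0[OF G_lam_nonzero] Ann_Int_Rdeg_0[OF F_lam_nonzero] by simp
  next
    case 2
    then show ?thesis using dim_Ann_F_lam_middle[OF lam aj] by simp
  next
    case 3
    then have "kv.dim (Ann (G_lam lam) \<inter> Rdeg i) = kv.dim (Ann (F_lam lam) \<inter> Rdeg i)"
      using dim_Ann_top[OF homog_G_lam G_lam_nonzero] dim_Ann_top[OF homog_F_lam F_lam_nonzero]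
      by (metis add_right_cancel)
    then show ?thesis using 3 one_le_j by simp
  next
    case 4
    then show ?thesis using Ann_Int_Rdeg_high[OF 4] by simp
  qed
qed

end

section \<open>Hilbert functions\<close>

lemma hilb_eq_add:
  fixes X Y :: "'k::field rpoly set"
  assumes "kv.dim (X \<inter> Rdeg i) = kv.dim (Y \<inter> Rdeg i) + d"
  shows "hilb Y i = hilb X i + d"
proof -
  have "kv.dim (X \<inter> Rdeg i) \<le> kv.dim (Rdeg i :: 'k rpoly set)" by (rule dim_le_dim_Rdeg) blast
  then show ?thesis using assms by (simp add: hilb_def kdim_def)
qed

lemma x2_notin_kspan: "Poly_Mapping.single (0,2,0,0) (1::'k::field) \<notin> kspan {vw * vw, vw * vx, vw * vy}"
proof -
  let ?W = "{p :: 'k rpoly. \<forall>m\<in>Poly_Mapping.keys p. 1 \<le> fst m}"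
  have "kv.subspace ?W"
    unfolding kv.subspace_def
  proof (intro conjI ballI allI)
    fix x y :: "'k rpoly" and c :: 'k
    assume x: "x \<in> ?W"
    then show "pscale c x \<in> ?W" by (auto simp: in_keys_iff)
    assume "y \<in> ?W"
    with x show "x + y \<in> ?W" using keys_add[of x y] by auto
  qed simp
  moreover have "{vw * vw, vw * vx, vw * vy} \<subseteq> ?W"
    by (auto simp: vw_def vx_def vy_def mult_single)
  ultimately have "kspan {vw * vw, vw * vx, vw * vy} \<subseteq> ?W"
    unfolding kspan_def by (rule kv.span_minimal[rotated])
  then show ?thesis by auto
qed

lemma dual_generator_if_I2:
  fixes G :: "'k::field dppoly"
  assumes G: "G \<in> DPxyz_deg j"
    and I2: "Ann (G + Poly_Mapping.single (1,0,0,j-1) 1) \<inter> Rdeg 2 = kspan {vw * vw, vw * vx, vw * vy}"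
  shows "dual_generator G j"
proof
  show "G \<in> Kxyz" "homog j G" using G by (auto simp: DPxyz_deg_def Kxyz_def homog_def)
  let ?x2 = "Poly_Mapping.single (0,2,0,0) (1::'k)"
  have "?x2 \<notin> Ann (G + Poly_Mapping.single (1,0,0,j-1) 1)"
    using I2 x2_notin_kspan single_in_Rdeg[of "(0,2,0,0)" 2] by auto
  then obtain c where "contract ?x2 (G + Poly_Mapping.single (1,0,0,j-1) 1) c \<noteq> 0"
    by (auto simp: Ann_iff)
  then have "Poly_Mapping.lookup G ((0,2,0,0) + c) \<noteq> 0"
    by (cases c) (simp add: contract_single_left lookup_add lookup_single)
  moreover have "(0,2,0,0) + c \<noteq> (0,0,0,j)" by (cases c) simp
  ultimately show "G \<noteq> Poly_Mapping.single (0,0,0,j) t" for t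
    by (auto simp: lookup_single)
qed

theorem lemma3p24:
  fixes G :: "'k::alg_closed_field dppoly" and j :: nat and lam :: 'k
  assumes G: "G \<in> DPxyz_deg j"
    and I2: "Ann (G + Poly_Mapping.single (1,0,0,j-1) 1) \<inter> Rdeg 2 = kspan {vw * vw, vw * vx, vw * vy}"
  defines "I \<equiv> Ann (G + Poly_Mapping.single (1,0,0,j-1) 1)"
    and "J \<equiv> Ann G"
    and "Jl \<equiv> Ann (G + Poly_Mapping.single (0,0,0,j) lam)"
    and "Il \<equiv> Ann (G + Poly_Mapping.single (1,0,0,j-1) 1 + Poly_Mapping.single (0,0,0,j) lam)"
  shows "hilb I = hilb Il \<and> hilb (I \<inter> J) = hilb (Il \<inter> Jl) \<and>
    ((2 * alpha J \<le> j \<and> lam \<noteq> 0) \<longrightarrow>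
      alpha Jl = j + 1 - alpha J \<and>
      (\<forall>i. hilb Jl i = (if alpha J \<le> i \<and> i \<le> j - alpha J then hilb J i + 1 else hilb J i)) \<and>
      (\<forall>i. hilb Il i = hilb Jl i + (if 1 \<le> i \<and> i \<le> j - 1 then 1 else 0)))"
proof -
  interpret dual_generator G j by (rule dual_generator_if_I2[OF G I2])
  have I: "I = Ann (F_lam 0)" and Il: "Il = Ann (F_lam lam)" and Jl: "Jl = Ann (G_lam lam)"
    by (simp_all add: I_def Il_def Jl_def F_lam_def G_lam_def)
  show ?thesis
    unfolding I Il Jl J_def
  proof (intro conjI impI allI ext)
    fix i
    show "hilb (Ann (F_lam 0)) i = hilb (Ann (F_lam lam)) i"
      using hilb_eq_add[where d = 0] dim_Ann_F_lam_Rdeg[of lam i] by simp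
    show "hilb (Ann (F_lam 0) \<inter> Ann G) i = hilb (Ann (F_lam lam) \<inter> Ann (G_lam lam)) i"
      using hilb_eq_add[where d = 0] dim_Ann_F_lam_Int_Ann_G_lam_Rdeg[of lam i] by simp
  next
    assume "2 * alphaG \<le> j \<and> lam \<noteq> 0"
    then have aj: "2 * alphaG \<le> j" and lam: "lam \<noteq> 0" by auto
    show "alpha (Ann (G_lam lam)) = j + 1 - alphaG" by (rule alpha_G_lam[OF lam aj])
    fix i
    show "hilb (Ann (G_lam lam)) i = (if alphaG \<le> i \<and> i \<le> j - alphaG then hilb (Ann G) i + 1 else hilb (Ann G) i)"
      using hilb_eq_add[OF dim_Ann_G_lam[OF lam aj, of i]] by simp
    show "hilb (Ann (F_lam lam)) i = hilb (Ann (G_lam lam)) i + (if 1 \<le> i \<and> i \<le> j - 1 then 1 else 0)"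
      using hilb_eq_add[OF dim_Ann_F_lam[OF lam aj, of i]] .
  qed
qed

end
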